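(* The logic $\mathsf{iKRI}:=\mathsf{ICK}\oplus((p\wedge(p\mathrel{\Box\!\!\!\rightarrow} q))\to q)\oplus(((p\mathrel{\Box\!\!\!\rightarrow} q)\wedge(q\mathrel{\Box\!\!\!\rightarrow} r))\to(p\mathrel{\Box\!\!\!\rightarrow} r))$ is sound and complete with respect to the class of conditional frames $(X,\leq,\mathcal{R})$ that satisfy, for all worlds $x\in X$ and upsets $a,b$: $x\in a$ implies $x\in{\uparrow}R_a[x]$, and $R_a[x]\subseteq b$ implies $R_a[x]\subseteq{\uparrow}R_b[x]$.
   Context: Formulas: $\phi ::= p\mid\bot\mid\phi\wedge\phi\mid\phi\vee\phi\mid\phi\to\phi\mid\phi\mathrel{\Box\!\!\!\rightarrow}\phi$. $\mathsf{ICK}\oplus\Gamma$ is the smallest set containing intuitionistic propositional logic, $\Gamma$, $(p\mathrel{\Box\!\!\!\rightarrow}(q\wedge r))\leftrightarrow((p\mathrel{\Box\!\!\!\rightarrow} q)\wedge(p\mathrel{\Box\!\!\!\rightarrow} r))$ and $(p\mathrel{\Box\!\!\!\rightarrow}\top)\leftrightarrow\top$, closed under uniform substitution, modus ponens and congruence rules for both arguments of $\mathrel{\Box\!\!\!\rightarrow}$. A conditional frame is $(X,\leq,\mathcal{R})$, $(X,\leq)$ a nonempty preorder, $\mathcal{R}=\{R_a\mid a\text{ an upset}\}$ with $(\leq\circ R_a)\subseteq(R_a\circ\leq)$; valuations assign upsets to letters and $x\models\phi\mathrel{\Box\!\!\!\rightarrow}\psi$ iff every $y$ with $xR_{V(\phi)}y$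 satisfies $\psi$. *)

theory Defs
  imports Main
begin

datatype fm = Var nat | Bot | And fm fm | Or fm fm | Imp fm fm | Cond fm fm

definition Top :: fm where "Top = Imp Bot Bot"
definition Iff :: "fm \<Rightarrow> fm \<Rightarrow> fm" where "Iff a b = And (Imp a b) (Imp b a)"

primrec subst :: "(nat \<Rightarrow> fm) \<Rightarrow> fm \<Rightarrow> fm" where
  "subst s (Var n) = s n"
| "subst s Bot = Bot"
| "subst s (And a b) = And (subst s a) (subst s b)"
| "subst s (Or a b) = Or (subst s a) (subst s b)"
| "subst s (Imp a b) = Imp (subst s a) (subst s b)"
| "subst s (Cond a b) = Cond (subst s a) (subst s b)"

text \<open>Intuitionistic propositional logic is given by its standard Hilbert axiom
schemata (with modus ponens). p, q, r are the letters 0, 1, 2.\<close>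

inductive_set ICK_ext :: "fm set \<Rightarrow> fm set" for \<Gamma> :: "fm set" where
  ipc1: "Imp a (Imp b a) \<in> ICK_ext \<Gamma>"
| ipc2: "Imp (Imp a (Imp b c)) (Imp (Imp a b) (Imp a c)) \<in> ICK_ext \<Gamma>"
| ipc3: "Imp (And a b) a \<in> ICK_ext \<Gamma>"
| ipc4: "Imp (And a b) b \<in> ICK_ext \<Gamma>"
| ipc5: "Imp a (Imp b (And a b)) \<in> ICK_ext \<Gamma>"
| ipc6: "Imp a (Or a b) \<in> ICK_ext \<Gamma>"
| ipc7: "Imp b (Or a b) \<in> ICK_ext \<Gamma>"
| ipc8: "Imp (Imp a c) (Imp (Imp b c) (Imp (Or a b) c)) \<in> ICK_ext \<Gamma>"
| ipc9: "Imp Bot a \<in> ICK_ext \<Gamma>"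
| gamma: "a \<in> \<Gamma> \<Longrightarrow> a \<in> ICK_ext \<Gamma>"
| ck_and: "Iff (Cond (Var 0) (And (Var 1) (Var 2)))
               (And (Cond (Var 0) (Var 1)) (Cond (Var 0) (Var 2))) \<in> ICK_ext \<Gamma>"
| ck_top: "Iff (Cond (Var 0) Top) Top \<in> ICK_ext \<Gamma>"
| us: "a \<in> ICK_ext \<Gamma> \<Longrightarrow> subst s a \<in> ICK_ext \<Gamma>"
| mp: "Imp a b \<in> ICK_ext \<Gamma> \<Longrightarrow> a \<in> ICK_ext \<Gamma> \<Longrightarrow> b \<in> ICK_ext \<Gamma>"
| cong_l: "Iff a b \<in> ICK_ext \<Gamma> \<Longrightarrow> Iff (Cond a c) (Cond b c) \<in> ICK_ext \<Gamma>"
| cong_r: "Iff a b \<in> ICK_ext \<Gamma> \<Longrightarrow> Iff (Cond c a) (Cond c b) \<in> ICK_ext \<Gamma>"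

definition iKRI :: "fm set" where
  "iKRI = ICK_ext
     { Imp (And (Var 0) (Cond (Var 0) (Var 1))) (Var 1),
       Imp (And (Cond (Var 0) (Var 1)) (Cond (Var 1) (Var 2))) (Cond (Var 0) (Var 2)) }"

definition upset :: "'w set \<Rightarrow> ('w \<Rightarrow> 'w \<Rightarrow> bool) \<Rightarrow> 'w set \<Rightarrow> bool" where
  "upset X le a \<longleftrightarrow> a \<subseteq> X \<and> (\<forall>x\<in>a. \<forall>y\<in>X. le x y \<longrightarrow> y \<in> a)"

definition up :: "'w set \<Rightarrow> ('w \<Rightarrow> 'w \<Rightarrow> bool) \<Rightarrow> 'w set \<Rightarrow> 'w set" where
  "up X le A = {y \<in> X. \<exists>x\<in>A. le x y}"

text \<open>R a is the relation R_a (only meaningful for upsets a); R_a[x] is its image of x.\<close>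
definition Rimg :: "('w set \<Rightarrow> 'w \<Rightarrow> 'w \<Rightarrow> bool) \<Rightarrow> 'w set \<Rightarrow> 'w \<Rightarrow> 'w set" where
  "Rimg R a x = {y. R a x y}"

definition cond_frame :: "'w set \<Rightarrow> ('w \<Rightarrow> 'w \<Rightarrow> bool) \<Rightarrow> ('w set \<Rightarrow> 'w \<Rightarrow> 'w \<Rightarrow> bool) \<Rightarrow> bool" where
  "cond_frame X le R \<longleftrightarrow>
     X \<noteq> {} \<and>
     (\<forall>x y. le x y \<longrightarrow> x \<in> X \<and> y \<in> X) \<and>
     (\<forall>x\<in>X. le x x) \<and>
     (\<forall>x y z. le x y \<longrightarrow> le y z \<longrightarrow> le x z) \<and>
     (\<forall>a. upset X le a \<longrightarrow>
        (\<forall>x y. R a x y \<longrightarrow> x \<in> X \<and> y \<in> X) \<and>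
        (\<forall>x y z. le x y \<and> R a y z \<longrightarrow> (\<exists>w. R a x w \<and> le w z)))"

fun sat :: "'w set \<Rightarrow> ('w \<Rightarrow> 'w \<Rightarrow> bool) \<Rightarrow> ('w set \<Rightarrow> 'w \<Rightarrow> 'w \<Rightarrow> bool) \<Rightarrow> (nat \<Rightarrow> 'w set)
            \<Rightarrow> 'w \<Rightarrow> fm \<Rightarrow> bool" where
  "sat X le R V x (Var p) \<longleftrightarrow> x \<in> V p"
| "sat X le R V x Bot \<longleftrightarrow> False"
| "sat X le R V x (And a b) \<longleftrightarrow> sat X le R V x a \<and> sat X le R V x b"
| "sat X le R V x (Or a b) \<longleftrightarrow> sat X le R V x a \<or> sat X le R V x b"
| "sat X le R V x (Imp a b) \<longleftrightarrow>
     (\<forall>y\<in>X. le x y \<longrightarrow> sat X le R V y a \<longrightarrow> sat X le R V y b)"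
| "sat X le R V x (Cond a b) \<longleftrightarrow>
     (\<forall>y. R {z \<in> X. sat X le R V z a} x y \<longrightarrow> sat X le R V y b)"

definition valid_frame :: "'w set \<Rightarrow> ('w \<Rightarrow> 'w \<Rightarrow> bool) \<Rightarrow> ('w set \<Rightarrow> 'w \<Rightarrow> 'w \<Rightarrow> bool) \<Rightarrow> fm \<Rightarrow> bool" where
  "valid_frame X le R a \<longleftrightarrow>
     (\<forall>V. (\<forall>p. upset X le (V p)) \<longrightarrow> (\<forall>x\<in>X. sat X le R V x a))"

definition KRI_frame :: "'w set \<Rightarrow> ('w \<Rightarrow> 'w \<Rightarrow> bool) \<Rightarrow> ('w set \<Rightarrow> 'w \<Rightarrow> 'w \<Rightarrow> bool) \<Rightarrow> bool" where
  "KRI_frame X le R \<longleftrightarrow> cond_frame X le R \<and>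
     (\<forall>x\<in>X. \<forall>a b. upset X le a \<longrightarrow> upset X le b \<longrightarrow>
        (x \<in> a \<longrightarrow> x \<in> up X le (Rimg R a x)) \<and>
        (Rimg R a x \<subseteq> b \<longrightarrow> Rimg R a x \<subseteq> up X le (Rimg R b x)))"

end

theory Submission
  imports Defs
begin

text \<open>Soundness is an induction over derivations: truth sets are upsets by persistence, so
substitution and the congruence rules are sound on every conditional frame, and the two frame
conditions validate exactly the two extra axioms.

Completeness uses a canonical model whose worlds are the prime theories, ordered by inclusion.
For an upset \<open>A\<close> defined by a formula \<open>\<phi>\<close>, \<open>R\<^sub>A\<close> relates \<open>G\<close> to every
prime \<open>D\<close> containing \<open>{\<psi>. \<phi> \<box>\<rightarrow> \<psi> \<in> G}\<close>; by the congruence rule this does not depend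
on the choice of \<open>\<phi>\<close>, and the Lindenbaum lemma gives the truth lemma. The axiom
\<open>p \<and> (p \<box>\<rightarrow> q) \<rightarrow> q\<close> makes \<open>R\<^sub>A\<close> reflexive on \<open>A\<close>, and if \<open>R\<^sub>A[G] \<subseteq> B\<close> then
\<open>\<phi>\<^sub>A \<box>\<rightarrow> \<phi>\<^sub>B \<in> G\<close>, so transitivity of \<open>\<box>\<rightarrow>\<close> yields \<open>R\<^sub>A[G] \<subseteq> R\<^sub>B[G]\<close>.\<close>

section \<open>Soundness\<close>

lemma valid_frameD:
  "valid_frame X le R \<phi> \<Longrightarrow> (\<And>p. upset X le (V p)) \<Longrightarrow> x \<in> X \<Longrightarrow> sat X le R V x \<phi>"
  unfolding valid_frame_def by blast

lemma cond_frameD: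
  assumes "cond_frame X le R"
  shows "le x y \<Longrightarrow> x \<in> X" and "le x y \<Longrightarrow> y \<in> X" and "x \<in> X \<Longrightarrow> le x x"
    and "le x y \<Longrightarrow> le y z \<Longrightarrow> le x z"
    and "upset X le a \<Longrightarrow> R a x y \<Longrightarrow> y \<in> X"
    and "upset X le a \<Longrightarrow> le x y \<Longrightarrow> R a y z \<Longrightarrow> \<exists>w. R a x w \<and> le w z"
  using assms unfolding cond_frame_def by blast+

lemma sat_mono:
  assumes frame: "cond_frame X le R" and V: "\<forall>p. upset X le (V p)"
  shows "le x y \<Longrightarrow> sat X le R V x \<phi> \<Longrightarrow> sat X le R V y \<phi>"
proof (induction \<phi> arbitrary: x y)
  case (Var p)
  then show ?case
    using V cond_frameD(2)[OF frame] unfolding upset_def by auto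
next
  case (Imp a b)
  then show ?case
    using cond_frameD(4)[OF frame] by auto
next
  case (Cond a b)
  let ?A = "{z \<in> X. sat X le R V z a}"
  have "upset X le ?A"
    using Cond.IH(1) unfolding upset_def by blast
  show ?case
    unfolding sat.simps
  proof (intro allI impI)
    fix z assume "R ?A y z"
    then obtain w where "R ?A x w" and "le w z"
      using cond_frameD(6)[OF frame \<open>upset X le ?A\<close> Cond.prems(1)] by blast
    then show "sat X le R V z b"
      using Cond.prems(2) Cond.IH(2) by simp
  qed
qed auto

lemma upset_truth_set:
  assumes "cond_frame X le R" and "\<forall>p. upset X le (V p)"
  shows "upset X le {z \<in> X. sat X le R V z \<phi>}"
  unfolding upset_def using sat_mono[OF assms] by blast

lemma sat_subst:
  assumes frame: "cond_frame X le R" and V: "\<forall>p. upset X le (V p)"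
  shows "x \<in> X \<Longrightarrow>
    sat X le R (\<lambda>p. {z \<in> X. sat X le R V z (s p)}) x \<phi> \<longleftrightarrow> sat X le R V x (subst s \<phi>)"
proof (induction \<phi> arbitrary: x)
  case (Cond a b)
  let ?A = "{z \<in> X. sat X le R V z (subst s a)}"
  have "{z \<in> X. sat X le R (\<lambda>p. {z \<in> X. sat X le R V z (s p)}) z a} = ?A"
    using Cond.IH(1) by blast
  moreover have "y \<in> X" if "R ?A x y" for y
    using cond_frameD(5)[OF frame upset_truth_set[OF frame V] that] .
  ultimately show ?case
    using Cond.IH(2) by simp
qed simp_all

lemma valid_frame_subst:
  assumes frame: "cond_frame X le R" and valid: "valid_frame X le R \<phi>"
  shows "valid_frame X le R (subst s \<phi>)"
  unfolding valid_frame_def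
proof (intro allI impI ballI)
  fix V :: "nat \<Rightarrow> _" and x assume V: "\<forall>p. upset X le (V p)" and "x \<in> X"
  have "sat X le R (\<lambda>p. {z \<in> X. sat X le R V z (s p)}) x \<phi>"
    using valid_frameD[OF valid upset_truth_set[OF frame V] \<open>x \<in> X\<close>] .
  then show "sat X le R V x (subst s \<phi>)"
    using sat_subst[OF frame V \<open>x \<in> X\<close>] by blast
qed

lemma truth_set_eq_if_valid_Iff:
  assumes frame: "cond_frame X le R" and "valid_frame X le R (Iff a b)"
    and "\<forall>p. upset X le (V p)"
  shows "{z \<in> X. sat X le R V z a} = {z \<in> X. sat X le R V z b}"
  using valid_frameD[OF assms(2)] assms(3) cond_frameD(3)[OF frame] by (auto simp: Iff_def)

lemma ICK_ext_sound:
  assumes frame: "cond_frame X le R" and \<Gamma>: "\<And>\<gamma>. \<gamma> \<in> \<Gamma> \<Longrightarrow> valid_frame X le R \<gamma>"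
    and "\<phi> \<in> ICK_ext \<Gamma>"
  shows "valid_frame X le R \<phi>"
  using assms(3)
proof induction
  case (gamma \<gamma>)
  then show ?case
    using \<Gamma> by blast
next
  case (us \<phi> s)
  then show ?case
    using valid_frame_subst[OF frame] by blast
next
  case (mp a b)
  then show ?case
    using cond_frameD(3)[OF frame] by (simp add: valid_frame_def)
next
  case (cong_l a b c)
  show ?case
    unfolding valid_frame_def
  proof (intro allI impI ballI)
    fix V :: "nat \<Rightarrow> _" and x assume "\<forall>p. upset X le (V p)"
    then have "{z \<in> X. sat X le R V z a} = {z \<in> X. sat X le R V z b}"
      using truth_set_eq_if_valid_Iff[OF frame cong_l.IH] by blast
    then show "sat X le R V x (Iff (Cond a c) (Cond b c))"
      by (simp add: Iff_def)
  qed
next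
  case (cong_r a b c)
  show ?case
    unfolding valid_frame_def
  proof (intro allI impI ballI)
    fix V :: "nat \<Rightarrow> _" and x assume V: "\<forall>p. upset X le (V p)"
    then have "sat X le R V z a \<longleftrightarrow> sat X le R V z b" if "z \<in> X" for z
      using truth_set_eq_if_valid_Iff[OF frame cong_r.IH] that by blast
    moreover have "z \<in> X" if "R {z \<in> X. sat X le R V z c} y z" for y z
      using cond_frameD(5)[OF frame upset_truth_set[OF frame V] that] .
    ultimately show "sat X le R V x (Iff (Cond c a) (Cond c b))"
      by (simp add: Iff_def)
  qed
next
  case ck_and
  show ?case
    unfolding valid_frame_def Iff_def by auto
next
  case ck_top
  show ?case
    unfolding valid_frame_def Iff_def Top_def by auto
qed (* the intuitionistic axioms, by persistence *)
  (unfold valid_frame_def sat.simps,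
     (intro allI impI ballI; meson sat_mono[OF frame] cond_frameD[OF frame])+)

section \<open>Theories and the Lindenbaum lemma\<close>

context
  fixes \<Gamma> :: "fm set"
begin

lemma ICK_Imp_refl: "Imp a a \<in> ICK_ext \<Gamma>"
  by (meson ICK_ext.ipc1 ICK_ext.ipc2 ICK_ext.mp)

lemma ICK_IffI: "Imp a b \<in> ICK_ext \<Gamma> \<Longrightarrow> Imp b a \<in> ICK_ext \<Gamma> \<Longrightarrow> Iff a b \<in> ICK_ext \<Gamma>"
  unfolding Iff_def by (meson ICK_ext.ipc5 ICK_ext.mp)

lemma ICK_Cond_And: "Iff (Cond a (And b c)) (And (Cond a b) (Cond a c)) \<in> ICK_ext \<Gamma>"
  using ICK_ext.us[OF ICK_ext.ck_and, where s = "\<lambda>n. [a, b, c] ! n"] by (simp add: Iff_def)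

lemma ICK_Cond_Top: "Iff (Cond a Top) Top \<in> ICK_ext \<Gamma>"
  using ICK_ext.us[OF ICK_ext.ck_top, where s = "\<lambda>_. a"] by (simp add: Iff_def Top_def)

definition is_theory :: "fm set \<Rightarrow> bool" where
  "is_theory T \<longleftrightarrow> ICK_ext \<Gamma> \<subseteq> T \<and> (\<forall>a b. Imp a b \<in> T \<longrightarrow> a \<in> T \<longrightarrow> b \<in> T)"

lemma is_theory_ICK_ext: "is_theory (ICK_ext \<Gamma>)"
  unfolding is_theory_def using ICK_ext.mp by blast

lemma theory_derivable: "is_theory T \<Longrightarrow> a \<in> ICK_ext \<Gamma> \<Longrightarrow> a \<in> T"
  unfolding is_theory_def by blast

lemma theory_mp: "is_theory T \<Longrightarrow> Imp a b \<in> T \<Longrightarrow> a \<in> T \<Longrightarrow> b \<in> T"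
  unfolding is_theory_def by blast

lemma theory_And_iff: "is_theory T \<Longrightarrow> And a b \<in> T \<longleftrightarrow> a \<in> T \<and> b \<in> T"
  by (meson ICK_ext.ipc3 ICK_ext.ipc4 ICK_ext.ipc5 theory_derivable theory_mp)

lemma theory_Iff_mp: "is_theory T \<Longrightarrow> Iff a b \<in> T \<Longrightarrow> a \<in> T \<longleftrightarrow> b \<in> T"
  unfolding Iff_def by (meson theory_And_iff theory_mp)

definition with_hyp :: "fm set \<Rightarrow> fm \<Rightarrow> fm set" where
  "with_hyp T a = {c. Imp a c \<in> T}"

lemma is_theory_with_hyp:
  assumes T: "is_theory T"
  shows "is_theory (with_hyp T a)" and "T \<subseteq> with_hyp T a" and "a \<in> with_hyp T a"
proof -
  show sub: "T \<subseteq> with_hyp T a"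
    unfolding with_hyp_def by (auto intro: theory_mp[OF T] theory_derivable[OF T] ICK_ext.ipc1)
  have "Imp a c \<in> T" if "Imp a (Imp b c) \<in> T" "Imp a b \<in> T" for b c
    using that by (meson T ICK_ext.ipc2 theory_derivable theory_mp)
  with sub T show "is_theory (with_hyp T a)"
    unfolding is_theory_def with_hyp_def by auto
  show "a \<in> with_hyp T a"
    unfolding with_hyp_def using T ICK_Imp_refl theory_derivable by blast
qed

lemma Imp_in_theoryI:
  assumes "is_theory T" and "\<And>U. is_theory U \<Longrightarrow> T \<subseteq> U \<Longrightarrow> a \<in> U \<Longrightarrow> b \<in> U"
  shows "Imp a b \<in> T"
  using assms is_theory_with_hyp[OF assms(1), of a] unfolding with_hyp_def by blast

lemma ICK_Cond_necessitation:
  assumes "c \<in> ICK_ext \<Gamma>"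
  shows "Cond k c \<in> ICK_ext \<Gamma>"
proof -
  have "Iff c Top \<in> ICK_ext \<Gamma>"
    using assms ICK_Imp_refl unfolding Top_def
    by (intro ICK_IffI) (auto intro: ICK_ext.mp[OF ICK_ext.ipc1])
  then have "Iff (Cond k c) (Cond k Top) \<in> ICK_ext \<Gamma>"
    by (rule ICK_ext.cong_r)
  moreover have "Cond k Top \<in> ICK_ext \<Gamma>"
    using ICK_Cond_Top ICK_Imp_refl theory_Iff_mp[OF is_theory_ICK_ext] unfolding Top_def by blast
  ultimately show ?thesis
    using theory_Iff_mp[OF is_theory_ICK_ext] by blast
qed

lemma ICK_Cond_mono:
  assumes "Imp a b \<in> ICK_ext \<Gamma>"
  shows "Imp (Cond k a) (Cond k b) \<in> ICK_ext \<Gamma>"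
proof -
  have "Imp a (And a b) \<in> ICK_ext \<Gamma>"
    using assms by (intro Imp_in_theoryI[OF is_theory_ICK_ext])
      (meson subsetD theory_And_iff theory_mp)
  then have "Iff (Cond k a) (Cond k (And a b)) \<in> ICK_ext \<Gamma>"
    by (intro ICK_ext.cong_r ICK_IffI ICK_ext.ipc3)
  then show ?thesis
    by (intro Imp_in_theoryI[OF is_theory_ICK_ext])
      (meson ICK_Cond_And theory_Iff_mp theory_And_iff theory_derivable)
qed

lemma theory_Cond_And:
  "is_theory T \<Longrightarrow> Cond k a \<in> T \<Longrightarrow> Cond k b \<in> T \<Longrightarrow> Cond k (And a b) \<in> T"
  by (meson ICK_Cond_And theory_Iff_mp theory_And_iff theory_derivable)

lemma is_theory_Cond_content:
  assumes T: "is_theory T"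
  shows "is_theory {c. Cond k c \<in> T}"
  unfolding is_theory_def
proof safe
  show "Cond k c \<in> T" if "c \<in> ICK_ext \<Gamma>" for c
    using that T ICK_Cond_necessitation theory_derivable by blast
  fix a b assume "Cond k (Imp a b) \<in> T" "Cond k a \<in> T"
  then have "Cond k (And (Imp a b) a) \<in> T"
    using T theory_Cond_And by blast
  moreover have "Imp (And (Imp a b) a) b \<in> ICK_ext \<Gamma>"
    by (rule Imp_in_theoryI[OF is_theory_ICK_ext]) (meson theory_And_iff theory_mp)
  ultimately show "Cond k b \<in> T"
    using T ICK_Cond_mono theory_derivable theory_mp by blast
qed

definition prime_theory :: "fm set \<Rightarrow> bool" where
  "prime_theory T \<longleftrightarrow> is_theory T \<and> Bot \<notin> T \<and> (\<forall>a b. Or a b \<in> T \<longrightarrow> a \<in> T \<or> b \<in> T)"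

lemma Or_in_prime_theory_iff: "prime_theory G \<Longrightarrow> Or a b \<in> G \<longleftrightarrow> a \<in> G \<or> b \<in> G"
  unfolding prime_theory_def by (meson ICK_ext.ipc6 ICK_ext.ipc7 theory_derivable theory_mp)

lemma is_theory_Union_chain:
  assumes "C \<noteq> {}" and "chain\<^sub>\<subseteq> C" and "\<And>U. U \<in> C \<Longrightarrow> is_theory U"
  shows "is_theory (\<Union>C)"
  unfolding is_theory_def
proof safe
  show "a \<in> \<Union>C" if "a \<in> ICK_ext \<Gamma>" for a
    using assms(1,3) that theory_derivable by blast
  fix a b U V assume "Imp a b \<in> U" "U \<in> C" "a \<in> V" "V \<in> C"
  moreover have "U \<subseteq> V \<or> V \<subseteq> U"
    using assms(2) \<open>U \<in> C\<close> \<open>V \<in> C\<close> by (simp add: chain_subset_def)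
  ultimately show "b \<in> \<Union>C"
    using assms(3) theory_mp by (metis UnionI subsetD)
qed

lemma maximal_theory_prime:
  assumes M: "is_theory M" "\<psi> \<notin> M"
    and maximal: "\<And>U. is_theory U \<Longrightarrow> M \<subseteq> U \<Longrightarrow> \<psi> \<notin> U \<Longrightarrow> U = M"
  shows "prime_theory M"
proof -
  have Imp_psi: "Imp a \<psi> \<in> M" if "a \<notin> M" for a
  proof (rule ccontr)
    assume "Imp a \<psi> \<notin> M"
    then have "with_hyp M a = M"
      using maximal is_theory_with_hyp[OF M(1)] by (simp add: with_hyp_def)
    then show False
      using is_theory_with_hyp(3)[OF M(1), of a] that by blast
  qed
  have "a \<in> M \<or> b \<in> M" if "Or a b \<in> M" for a b
    using that Imp_psi M ICK_ext.ipc8 theory_derivable theory_mp by meson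
  moreover have "Bot \<notin> M"
    using M ICK_ext.ipc9 theory_derivable theory_mp by meson
  ultimately show ?thesis
    using M(1) by (simp add: prime_theory_def)
qed

lemma lindenbaum:
  assumes "is_theory T" and "\<psi> \<notin> T"
  obtains D where "prime_theory D" and "T \<subseteq> D" and "\<psi> \<notin> D"
proof -
  let ?A = "{U. is_theory U \<and> T \<subseteq> U \<and> \<psi> \<notin> U}"
  have "\<exists>M\<in>?A. \<forall>U\<in>?A. M \<subseteq> U \<longrightarrow> U = M"
  proof (rule subset_Zorn_nonempty)
    show "?A \<noteq> {}"
      using assms by blast
    fix C assume "C \<noteq> {}" "subset.chain ?A C"
    then show "\<Union>C \<in> ?A"
      using is_theory_Union_chain[of C]
      by (auto simp: subset.chain_def chain_subset_def)
  qed
  then obtain M where "M \<in> ?A" and "\<forall>U\<in>?A. M \<subseteq> U \<longrightarrow> U = M"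
    by blast
  then show ?thesis
    using maximal_theory_prime[of M \<psi>] that by blast
qed

section \<open>The canonical model\<close>

definition canon_worlds :: "fm set set" where
  "canon_worlds = {T. prime_theory T}"

definition canon_le :: "fm set \<Rightarrow> fm set \<Rightarrow> bool" where
  "canon_le G D \<longleftrightarrow> G \<in> canon_worlds \<and> D \<in> canon_worlds \<and> G \<subseteq> D"

definition proof_set :: "fm \<Rightarrow> fm set set" where
  "proof_set a = {G \<in> canon_worlds. a \<in> G}"

definition canon_val :: "nat \<Rightarrow> fm set set" where
  "canon_val p = proof_set (Var p)"

(* For an upset that is not a truth set any choice would do; Top makes R_A coincide with the
   relation of the full set of worlds, which keeps both frame conditions true. *)
definition defining_fm :: "fm set set \<Rightarrow> fm" where
  "defining_fm A = (if A \<in> range proof_set then SOME a. proof_set a = A else Top)"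

definition canon_R :: "fm set set \<Rightarrow> fm set \<Rightarrow> fm set \<Rightarrow> bool" where
  "canon_R A G D \<longleftrightarrow>
     G \<in> canon_worlds \<and> D \<in> canon_worlds \<and> {c. Cond (defining_fm A) c \<in> G} \<subseteq> D"

lemma canon_world_theory: "G \<in> canon_worlds \<Longrightarrow> is_theory G"
  by (simp add: canon_worlds_def prime_theory_def)

lemma Imp_in_theory_iff:
  assumes T: "is_theory T"
  shows "Imp a b \<in> T \<longleftrightarrow> (\<forall>D\<in>canon_worlds. T \<subseteq> D \<longrightarrow> a \<in> D \<longrightarrow> b \<in> D)"
proof
  show "Imp a b \<in> T \<Longrightarrow> \<forall>D\<in>canon_worlds. T \<subseteq> D \<longrightarrow> a \<in> D \<longrightarrow> b \<in> D"
    using canon_world_theory theory_mp by blast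
next
  assume b: "\<forall>D\<in>canon_worlds. T \<subseteq> D \<longrightarrow> a \<in> D \<longrightarrow> b \<in> D"
  show "Imp a b \<in> T"
  proof (rule ccontr)
    assume "Imp a b \<notin> T"
    then obtain D where "prime_theory D" "with_hyp T a \<subseteq> D" "b \<notin> D"
      using lindenbaum[OF is_theory_with_hyp(1)[OF T]] by (auto simp: with_hyp_def)
    then show False
      using b is_theory_with_hyp(2,3)[OF T, of a] by (auto simp: canon_worlds_def)
  qed
qed

lemma Cond_in_theory_iff:
  assumes T: "is_theory T"
  shows "Cond k c \<in> T \<longleftrightarrow> (\<forall>D\<in>canon_worlds. {b. Cond k b \<in> T} \<subseteq> D \<longrightarrow> c \<in> D)"
proof
  assume c: "\<forall>D\<in>canon_worlds. {b. Cond k b \<in> T} \<subseteq> D \<longrightarrow> c \<in> D"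
  show "Cond k c \<in> T"
  proof (rule ccontr)
    assume "Cond k c \<notin> T"
    then obtain D where "prime_theory D" "{b. Cond k b \<in> T} \<subseteq> D" "c \<notin> D"
      using lindenbaum[OF is_theory_Cond_content[OF T]] by auto
    then show False
      using c by (auto simp: canon_worlds_def)
  qed
qed auto

lemma Imp_derivable_if_proof_set_subset:
  assumes "proof_set a \<subseteq> proof_set b"
  shows "Imp a b \<in> ICK_ext \<Gamma>"
  using assms Imp_in_theory_iff[OF is_theory_ICK_ext] by (auto simp: proof_set_def)

lemma Cond_in_canon_world_proof_set_cong:
  assumes "proof_set a = proof_set b" and "G \<in> canon_worlds"
  shows "Cond a c \<in> G \<longleftrightarrow> Cond b c \<in> G"
proof -
  have "Iff a b \<in> ICK_ext \<Gamma>"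
    using assms(1) by (simp add: ICK_IffI Imp_derivable_if_proof_set_subset)
  then have "Iff (Cond a c) (Cond b c) \<in> G"
    using assms(2) ICK_ext.cong_l canon_world_theory theory_derivable by blast
  then show ?thesis
    using assms(2) canon_world_theory theory_Iff_mp by blast
qed

lemma proof_set_defining_fm:
  assumes "A \<in> range proof_set"
  shows "proof_set (defining_fm A) = A"
proof -
  have "\<exists>a. proof_set a = A"
    using assms by auto
  then have "proof_set (SOME a. proof_set a = A) = A"
    by (rule someI_ex)
  then show ?thesis
    using assms by (simp add: defining_fm_def)
qed

lemma truth_lemma:
  "G \<in> canon_worlds \<Longrightarrow> sat canon_worlds canon_le canon_R canon_val G \<phi> \<longleftrightarrow> \<phi> \<in> G"
proof (induction \<phi> arbitrary: G)
  case (Var p)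
  then show ?case
    by (simp add: canon_val_def proof_set_def)
next
  case Bot
  then show ?case
    by (simp add: canon_worlds_def prime_theory_def)
next
  case (And a b)
  then show ?case
    using canon_world_theory theory_And_iff by simp
next
  case (Or a b)
  then show ?case
    using Or_in_prime_theory_iff by (simp add: canon_worlds_def)
next
  case (Imp a b)
  then show ?case
    using Imp_in_theory_iff[OF canon_world_theory[OF Imp.prems]] by (simp add: canon_le_def)
next
  case (Cond a b)
  let ?sat = "sat canon_worlds canon_le canon_R canon_val"
  have truth_set: "{D \<in> canon_worlds. ?sat D a} = proof_set a"
    using Cond.IH(1) by (auto simp: proof_set_def)
  have "?sat G (Cond a b) \<longleftrightarrow> (\<forall>D. canon_R (proof_set a) G D \<longrightarrow> b \<in> D)"
    using Cond.IH(2) unfolding sat.simps truth_set canon_R_def by blast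
  also have "\<dots> \<longleftrightarrow> Cond (defining_fm (proof_set a)) b \<in> G"
    using Cond_in_theory_iff[OF canon_world_theory[OF Cond.prems]] Cond.prems
    unfolding canon_R_def by blast
  also have "\<dots> \<longleftrightarrow> Cond a b \<in> G"
    using Cond_in_canon_world_proof_set_cong[OF proof_set_defining_fm Cond.prems] by simp
  finally show ?case .
qed

lemma cond_frame_canonical:
  assumes "canon_worlds \<noteq> {}"
  shows "cond_frame canon_worlds canon_le canon_R"
proof -
  have "\<exists>F. canon_R A G F \<and> canon_le F E" if "canon_le G D" "canon_R A D E" for A G D E
    using that by (intro exI[of _ E]) (auto simp: canon_le_def canon_R_def)
  then show ?thesis
    using assms unfolding cond_frame_def by (auto simp: canon_le_def canon_R_def)
qed

lemma upset_canon_val: "upset canon_worlds canon_le (canon_val p)"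
  by (auto simp: upset_def canon_val_def proof_set_def canon_le_def)

lemma defining_fm_mem:
  assumes "G \<in> canon_worlds" and "G \<in> A"
  shows "defining_fm A \<in> G"
proof (cases "A \<in> range proof_set")
  case True
  then show ?thesis
    using assms proof_set_defining_fm by (auto simp: proof_set_def)
next
  case False
  then show ?thesis
    using assms(1) canon_world_theory theory_derivable ICK_Imp_refl
    by (simp add: defining_fm_def Top_def)
qed

lemma Cond_defining_fm_mem:
  assumes G: "G \<in> canon_worlds" and sub: "Rimg canon_R A G \<subseteq> B"
  shows "Cond (defining_fm A) (defining_fm B) \<in> G"
proof (cases "B \<in> range proof_set")
  case True
  have "defining_fm B \<in> D" if "D \<in> canon_worlds" "{c. Cond (defining_fm A) c \<in> G} \<subseteq> D" for D
    using that G sub proof_set_defining_fm[OF True] by (auto simp: Rimg_def canon_R_def proof_set_def)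
  then show ?thesis
    using Cond_in_theory_iff[OF canon_world_theory[OF G]] by blast
next
  case False
  then show ?thesis
    using G canon_world_theory theory_derivable ICK_Cond_necessitation ICK_Imp_refl
    by (simp add: defining_fm_def Top_def)
qed

lemma canonical_countermodel:
  assumes "\<phi> \<notin> ICK_ext \<Gamma>"
  shows "canon_worlds \<noteq> {}" and "\<not> valid_frame canon_worlds canon_le canon_R \<phi>"
proof -
  obtain D where "prime_theory D" and "\<phi> \<notin> D"
    using lindenbaum[OF is_theory_ICK_ext assms] by blast
  then have D: "D \<in> canon_worlds"
    by (simp add: canon_worlds_def)
  then show "canon_worlds \<noteq> {}"
    by blast
  have "\<not> sat canon_worlds canon_le canon_R canon_val D \<phi>"
    using truth_lemma[OF D] \<open>\<phi> \<notin> D\<close> by blast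
  then show "\<not> valid_frame canon_worlds canon_le canon_R \<phi>"
    using valid_frameD[of canon_worlds canon_le canon_R \<phi> canon_val D] upset_canon_val D
    by blast
qed

lemma canon_R_refl:
  assumes Cond_mp: "\<And>a b. Imp (And a (Cond a b)) b \<in> ICK_ext \<Gamma>"
    and G: "G \<in> canon_worlds" and "G \<in> A"
  shows "canon_R A G G"
proof -
  have "c \<in> G" if "Cond (defining_fm A) c \<in> G" for c
    using that defining_fm_mem[OF G \<open>G \<in> A\<close>] Cond_mp canon_world_theory[OF G]
    by (meson theory_And_iff theory_derivable theory_mp)
  then show ?thesis
    using G by (auto simp: canon_R_def)
qed

lemma canon_R_Rimg_subset:
  assumes Cond_trans: "\<And>a b c. Imp (And (Cond a b) (Cond b c)) (Cond a c) \<in> ICK_ext \<Gamma>"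
    and G: "G \<in> canon_worlds" and sub: "Rimg canon_R A G \<subseteq> B" and "canon_R A G D"
  shows "canon_R B G D"
proof -
  have "Cond (defining_fm A) c \<in> G" if "Cond (defining_fm B) c \<in> G" for c
    using that Cond_defining_fm_mem[OF G sub] Cond_trans canon_world_theory[OF G]
    by (meson theory_And_iff theory_derivable theory_mp)
  then show ?thesis
    using \<open>canon_R A G D\<close> by (auto simp: canon_R_def)
qed

lemma KRI_frame_canonical:
  assumes "canon_worlds \<noteq> {}"
    and Cond_mp: "\<And>a b. Imp (And a (Cond a b)) b \<in> ICK_ext \<Gamma>"
    and Cond_trans: "\<And>a b c. Imp (And (Cond a b) (Cond b c)) (Cond a c) \<in> ICK_ext \<Gamma>"
  shows "KRI_frame canon_worlds canon_le canon_R"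
  unfolding KRI_frame_def
proof (intro conjI ballI allI impI)
  show "cond_frame canon_worlds canon_le canon_R"
    using cond_frame_canonical[OF assms(1)] .
  fix G A B assume G: "G \<in> canon_worlds"
  show "G \<in> up canon_worlds canon_le (Rimg canon_R A G)" if "G \<in> A"
    using canon_R_refl[OF Cond_mp G that] G by (auto simp: up_def Rimg_def canon_le_def)
  show "Rimg canon_R A G \<subseteq> up canon_worlds canon_le (Rimg canon_R B G)"
    if "Rimg canon_R A G \<subseteq> B"
    using canon_R_Rimg_subset[OF Cond_trans G that]
    by (auto simp: up_def Rimg_def canon_le_def canon_R_def)
qed

end

section \<open>The logic iKRI\<close>

lemma KRI_frameD:
  assumes "KRI_frame X le R" and "x \<in> X" and "upset X le a" and "upset X le b"
  shows "x \<in> a \<Longrightarrow> \<exists>w. R a x w \<and> le w x"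
    and "Rimg R a x \<subseteq> b \<Longrightarrow> R a x y \<Longrightarrow> \<exists>w. R b x w \<and> le w y"
  using assms unfolding KRI_frame_def up_def Rimg_def by blast+

lemma KRI_frame_valid_Cond_mp:
  assumes KRI: "KRI_frame X le R"
  shows "valid_frame X le R (Imp (And a (Cond a b)) b)"
  unfolding valid_frame_def
proof (intro allI impI ballI)
  have frame: "cond_frame X le R"
    using KRI by (simp add: KRI_frame_def)
  fix V :: "nat \<Rightarrow> _" and x assume V: "\<forall>p. upset X le (V p)" and "x \<in> X"
  let ?A = "{z \<in> X. sat X le R V z a}"
  show "sat X le R V x (Imp (And a (Cond a b)) b)"
    unfolding sat.simps
  proof (intro ballI impI)
    fix y assume "y \<in> X" "le x y" and y: "sat X le R V y a \<and> (\<forall>z. R ?A y z \<longrightarrow> sat X le R V z b)"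
    then obtain w where "R ?A y w" and "le w y"
      using KRI_frameD(1)[OF KRI \<open>y \<in> X\<close> upset_truth_set[OF frame V] upset_truth_set[OF frame V]]
      by blast
    then show "sat X le R V y b"
      using y sat_mono[OF frame V] by blast
  qed
qed

lemma KRI_frame_valid_Cond_trans:
  assumes KRI: "KRI_frame X le R"
  shows "valid_frame X le R (Imp (And (Cond a b) (Cond b c)) (Cond a c))"
  unfolding valid_frame_def
proof (intro allI impI ballI)
  have frame: "cond_frame X le R"
    using KRI by (simp add: KRI_frame_def)
  fix V :: "nat \<Rightarrow> _" and x assume V: "\<forall>p. upset X le (V p)" and "x \<in> X"
  let ?A = "{z \<in> X. sat X le R V z a}" and ?B = "{z \<in> X. sat X le R V z b}"
  show "sat X le R V x (Imp (And (Cond a b) (Cond b c)) (Cond a c))"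
    unfolding sat.simps
  proof (intro ballI impI allI)
    fix y z assume "y \<in> X" "le x y" "R ?A y z"
      and y: "(\<forall>z. R ?A y z \<longrightarrow> sat X le R V z b) \<and> (\<forall>z. R ?B y z \<longrightarrow> sat X le R V z c)"
    have "Rimg R ?A y \<subseteq> ?B"
      using y cond_frameD(5)[OF frame upset_truth_set[OF frame V]] by (auto simp: Rimg_def)
    then obtain w where "R ?B y w" and "le w z"
      using KRI_frameD(2)[OF KRI \<open>y \<in> X\<close> upset_truth_set[OF frame V] upset_truth_set[OF frame V]]
        \<open>R ?A y z\<close> by blast
    then show "sat X le R V z c"
      using y sat_mono[OF frame V] by blast
  qed
qed

abbreviation KRI_axioms :: "fm set" where
  "KRI_axioms \<equiv>
     {Imp (And (Var 0) (Cond (Var 0) (Var 1))) (Var 1),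
      Imp (And (Cond (Var 0) (Var 1)) (Cond (Var 1) (Var 2))) (Cond (Var 0) (Var 2))}"

lemma iKRI_Cond_mp: "Imp (And a (Cond a b)) b \<in> iKRI"
proof -
  have "subst (\<lambda>n. [a, b] ! n) (Imp (And (Var 0) (Cond (Var 0) (Var 1))) (Var 1)) \<in> iKRI"
    unfolding iKRI_def by (rule ICK_ext.us, rule ICK_ext.gamma) simp
  then show ?thesis
    by simp
qed

lemma iKRI_Cond_trans: "Imp (And (Cond a b) (Cond b c)) (Cond a c) \<in> iKRI"
proof -
  have "subst (\<lambda>n. [a, b, c] ! n)
      (Imp (And (Cond (Var 0) (Var 1)) (Cond (Var 1) (Var 2))) (Cond (Var 0) (Var 2))) \<in> iKRI"
    unfolding iKRI_def by (rule ICK_ext.us, rule ICK_ext.gamma) simp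
  then show ?thesis
    by simp
qed

theorem theorem5p12:
  shows "(\<phi> \<in> iKRI \<longrightarrow>
            (\<forall>(X::'w set) le R. KRI_frame X le R \<longrightarrow> valid_frame X le R \<phi>))
       \<and> ((\<forall>(X::fm set set) le R. KRI_frame X le R \<longrightarrow> valid_frame X le R \<phi>)
            \<longrightarrow> \<phi> \<in> iKRI)"
proof (intro conjI impI allI)
  fix X :: "'w set" and le R
  assume "\<phi> \<in> iKRI" and KRI: "KRI_frame X le R"
  have frame: "cond_frame X le R"
    using KRI by (simp add: KRI_frame_def)
  have "valid_frame X le R \<gamma>" if "\<gamma> \<in> KRI_axioms" for \<gamma>
    using that KRI_frame_valid_Cond_mp[OF KRI] KRI_frame_valid_Cond_trans[OF KRI] by blast
  then show "valid_frame X le R \<phi>"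
    using ICK_ext_sound[OF frame] \<open>\<phi> \<in> iKRI\<close> unfolding iKRI_def by blast
next
  assume valid: "\<forall>(X::fm set set) le R. KRI_frame X le R \<longrightarrow> valid_frame X le R \<phi>"
  show "\<phi> \<in> iKRI"
  proof (rule ccontr)
    assume "\<phi> \<notin> iKRI"
    then have nonempty: "canon_worlds KRI_axioms \<noteq> {}"
      and "\<not> valid_frame (canon_worlds KRI_axioms) (canon_le KRI_axioms) (canon_R KRI_axioms) \<phi>"
      using canonical_countermodel unfolding iKRI_def by blast+
    moreover have "KRI_frame (canon_worlds KRI_axioms) (canon_le KRI_axioms) (canon_R KRI_axioms)"
      using KRI_frame_canonical[OF nonempty iKRI_Cond_mp[unfolded iKRI_def] iKRI_Cond_trans[unfolded iKRI_def]] .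
    ultimately show False
      using valid by blast
  qed
qed

end
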